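(* Let $(L,\preceq,\bot,\top)$ be a bounded lattice with at least three elements and let $\{K_i\}_{i\in I}$ be a family of blocks of $L$ with $I$ a non-empty index set. If there exists $j\in I$ such that $K_j$ is a complete block and $\bigcup_{i\in I}K_i\subsetneq L$, then $\bigcup_{i\in I}K_i$ is a complete block of $L$.
   Context: For $k\in L$ let ${\uparrow}k=\{x\in L\mid k\preceq x\}$ and ${\downarrow}k=\{x\in L\mid x\preceq k\}$. A block of $L$ is a sublattice $K\subsetneq L$ (a proper subset) such that $K\setminus\{\bot,\top\}\neq\varnothing$ and $({\uparrow}k\cup{\downarrow}k)\setminus\{\bot,\top\}\subseteq K$ for every $k\in K\setminus\{\bot,\top\}$. A block $K$ is complete if $\bot,\top\in K$. *)

theory Defs
  imports Main
begin

text \<open>The bounded lattice L is the universe of a type of class bounded_lattice,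
  with order \<le>, bottom bot and top top.\<close>

definition sublattice :: "'a::lattice set \<Rightarrow> bool" where
  "sublattice K \<longleftrightarrow> (\<forall>x\<in>K. \<forall>y\<in>K. inf x y \<in> K \<and> sup x y \<in> K)"

definition is_block :: "'a::bounded_lattice set \<Rightarrow> bool" where
  "is_block K \<longleftrightarrow> sublattice K \<and> K \<subset> UNIV \<and> K - {bot, top} \<noteq> {} \<and>
     (\<forall>k \<in> K - {bot, top}. ({x. k \<le> x} \<union> {x. x \<le> k}) - {bot, top} \<subseteq> K)"

definition is_complete_block :: "'a::bounded_lattice set \<Rightarrow> bool" where
  "is_complete_block K \<longleftrightarrow> is_block K \<and> bot \<in> K \<and> top \<in> K"

end

theory Submission
  imports Defs
begin

text \<open>A union of blocks inherits from each block the closure under comparable elements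
  (other than \<open>bot\<close> and \<open>top\<close>). A set closed in this way that contains \<open>bot\<close> and \<open>top\<close> is
  automatically a sublattice: for \<open>x \<notin> {bot, top}\<close> the elements \<open>inf x y\<close> and \<open>sup x y\<close> are
  comparable with \<open>x\<close>, and for \<open>x \<in> {bot, top}\<close> they are one of \<open>bot\<close>, \<open>top\<close>, \<open>y\<close>.\<close>

definition closed_under_comparables :: "'a::bounded_lattice set \<Rightarrow> bool" where
  "closed_under_comparables K \<longleftrightarrow>
     (\<forall>k \<in> K - {bot, top}. ({x. k \<le> x} \<union> {x. x \<le> k}) - {bot, top} \<subseteq> K)"

lemma is_block_iff:
  "is_block K \<longleftrightarrow>
     sublattice K \<and> K \<subset> UNIV \<and> K - {bot, top} \<noteq> {} \<and> closed_under_comparables K"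
  unfolding is_block_def closed_under_comparables_def ..

lemma closed_under_comparablesD:
  assumes "closed_under_comparables K" "k \<in> K" "k \<notin> {bot, top}" "k \<le> x \<or> x \<le> k"
    and "x \<notin> {bot, top}"
  shows "x \<in> K"
  using assms unfolding closed_under_comparables_def by blast

lemma closed_under_comparables_UN:
  assumes "\<And>i. i \<in> I \<Longrightarrow> closed_under_comparables (K i)"
  shows "closed_under_comparables (\<Union>i\<in>I. K i)"
  unfolding closed_under_comparables_def
proof (intro ballI subsetI)
  fix k x
  assume k: "k \<in> (\<Union>i\<in>I. K i) - {bot, top}"
    and x: "x \<in> ({x. k \<le> x} \<union> {x. x \<le> k}) - {bot, top}"
  from k obtain i where "i \<in> I" "k \<in> K i" by blast
  with assms k x have "x \<in> K i" by (auto intro: closed_under_comparablesD)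
  with \<open>i \<in> I\<close> show "x \<in> (\<Union>i\<in>I. K i)" by blast
qed

lemma sublattice_if_closed_under_comparables:
  assumes closed: "closed_under_comparables K" and "bot \<in> K" "top \<in> K"
  shows "sublattice K"
  unfolding sublattice_def
proof (intro ballI conjI)
  fix x y
  assume "x \<in> K" "y \<in> K"
  show "inf x y \<in> K"
  proof (cases "x \<in> {bot, top}")
    case True
    with \<open>y \<in> K\<close> \<open>bot \<in> K\<close> show ?thesis by auto
  next
    case False
    with closed \<open>x \<in> K\<close> \<open>bot \<in> K\<close> \<open>top \<in> K\<close> show ?thesis
      by (cases "inf x y \<in> {bot, top}") (auto intro: closed_under_comparablesD)
  qed
  show "sup x y \<in> K"
  proof (cases "x \<in> {bot, top}")
    case True
    with \<open>y \<in> K\<close> \<open>top \<in> K\<close> show ?thesis by auto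
  next
    case False
    with closed \<open>x \<in> K\<close> \<open>bot \<in> K\<close> \<open>top \<in> K\<close> show ?thesis
      by (cases "sup x y \<in> {bot, top}") (auto intro: closed_under_comparablesD)
  qed
qed

theorem proposition17:
  fixes K :: "'i \<Rightarrow> 'a::bounded_lattice set" and I :: "'i set"
  assumes three: "\<exists>a b c :: 'a. a \<noteq> b \<and> b \<noteq> c \<and> a \<noteq> c"
    and "I \<noteq> {}"
    and "\<forall>i\<in>I. is_block (K i)"
    and "\<exists>j\<in>I. is_complete_block (K j)"
    and "(\<Union>i\<in>I. K i) \<subset> UNIV"
  shows "is_complete_block (\<Union>i\<in>I. K i)"
proof -
  obtain j where "j \<in> I" and Kj: "is_complete_block (K j)"
    using assms(4) by blast
  then have bot_top: "bot \<in> (\<Union>i\<in>I. K i)" "top \<in> (\<Union>i\<in>I. K i)"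
    and nontrivial: "(\<Union>i\<in>I. K i) - {bot, top} \<noteq> {}"
    unfolding is_complete_block_def is_block_iff by blast+
  have closed: "closed_under_comparables (\<Union>i\<in>I. K i)"
    using assms(3) by (simp add: is_block_iff closed_under_comparables_UN)
  then have "sublattice (\<Union>i\<in>I. K i)"
    using bot_top by (rule sublattice_if_closed_under_comparables)
  with closed bot_top nontrivial assms(5) show ?thesis
    unfolding is_complete_block_def is_block_iff by blast
qed

end
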